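(* Let $G=(V,E)$ be an undirected graph with $n$ vertices and non-negative edge weights of maximum value $W$, let $K$ be a positive integer, and let $\varepsilon>0$. Let $s,t \in V$ be vertices with finite distance $d(s,t)$, set $r = \frac{\varepsilon}{2} d(s,t) + W$, and let $P$ be a shortest $s$-$t$ path in $G$. (i) If all vertices of $P$ lie in $V_r$, then the hop-distance from $s$ to $t$ in $H$ is at most $\lceil 2/\varepsilon\rceil$. (ii) If all vertices of $P$ lie in $V_r$, then $V(P)\cap A_{1/\varepsilon}(s)\cap A_{1/\varepsilon}(t) \neq \emptyset$. (iii) If $P$ contains a vertex of $V\setminus V_r$, then $(V(P)\setminus V_r)\cap A_{1/\varepsilon}(s)$ or $(V(P)\setminus V_r)\cap A_{1/\varepsilon}(t)$ is non-empty.
   Context: $d(u,v)$ is the weighted distance in $G$. For $v\in V$, $K[v]$ is a set of the $K$ vertices closest to $v$ in $G$ (including $v$, ties broken arbitrarily; the whole connected component of $v$ if it has fewer than $K$ vertices). $\mathrm{ball}(v,r)=\{u\in V: d(v,u)\le r\}$ and $V_r=\{v\in V:\mathrm{ball}(v,r)\subseteq K[v]\}$. $H$ is the auxiliary graph on vertex set $V$ with, for each $v\in V$, an edge (hop) from $v$ to every $v'\in K[v]\setminus\{v\}$, of weight $d(v,v')$; a hop may be taken from $v$ to $v'$ only when $v'\in K[v]$. The hop-distance from $x$ to $y$ in $H$ is the minimum number of hops on a walk in $H$ from $x$ to $y$. For a vertex $x$, $A_{1/\varepsilon}(x)$ is the set of vertices reachable from $x$ in $H$ by at most $\lceil 1/\varepsilon\rceil$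 hops. *)

theory Defs
  imports Main "HOL-Library.Extended_Real"
begin

definition wgraph :: "'a set \<Rightarrow> 'a set set \<Rightarrow> ('a set \<Rightarrow> real) \<Rightarrow> bool" where
  "wgraph V E w \<longleftrightarrow> finite V \<and>
     (\<forall>e\<in>E. \<exists>u v. u \<noteq> v \<and> u \<in> V \<and> v \<in> V \<and> e = {u, v}) \<and>
     (\<forall>e\<in>E. w e \<ge> 0)"

definition max_weight :: "'a set set \<Rightarrow> ('a set \<Rightarrow> real) \<Rightarrow> real" where
  "max_weight E w = Max (insert 0 (w ` E))"

definition is_walk :: "'a set \<Rightarrow> 'a set set \<Rightarrow> 'a list \<Rightarrow> bool" where
  "is_walk V E p \<longleftrightarrow> p \<noteq> [] \<and> set p \<subseteq> V \<and> successively (\<lambda>a b. {a, b} \<in> E) p"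

definition walk_weight :: "('a set \<Rightarrow> real) \<Rightarrow> 'a list \<Rightarrow> real" where
  "walk_weight w p = sum_list (map (\<lambda>(a, b). w {a, b}) (zip p (tl p)))"

definition gdist :: "'a set \<Rightarrow> 'a set set \<Rightarrow> ('a set \<Rightarrow> real) \<Rightarrow> 'a \<Rightarrow> 'a \<Rightarrow> ereal" where
  "gdist V E w u v = Inf {ereal (walk_weight w p) | p. is_walk V E p \<and> hd p = u \<and> last p = v}"

definition is_shortest_path :: "'a set \<Rightarrow> 'a set set \<Rightarrow> ('a set \<Rightarrow> real) \<Rightarrow> 'a \<Rightarrow> 'a \<Rightarrow> 'a list \<Rightarrow> bool" where
  "is_shortest_path V E w u v p \<longleftrightarrow> is_walk V E p \<and> distinct p \<and> hd p = u \<and> last p = v \<and>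
     ereal (walk_weight w p) = gdist V E w u v"

definition comp :: "'a set \<Rightarrow> 'a set set \<Rightarrow> ('a set \<Rightarrow> real) \<Rightarrow> 'a \<Rightarrow> 'a set" where
  "comp V E w v = {u \<in> V. gdist V E w v u < \<infinity>}"

text \<open>Kset is a valid choice of K[v] for every v: a set of the K vertices closest to v
  (including v, ties arbitrary), or the whole component if it has fewer than K vertices.\<close>
definition valid_Ksets :: "'a set \<Rightarrow> 'a set set \<Rightarrow> ('a set \<Rightarrow> real) \<Rightarrow> nat \<Rightarrow> ('a \<Rightarrow> 'a set) \<Rightarrow> bool" where
  "valid_Ksets V E w K Kset \<longleftrightarrow> (\<forall>v\<in>V.
     v \<in> Kset v \<and> Kset v \<subseteq> comp V E w v \<and>
     card (Kset v) = min K (card (comp V E w v)) \<and>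
     (\<forall>u\<in>Kset v. \<forall>x\<in>comp V E w v - Kset v. gdist V E w v u \<le> gdist V E w v x))"

definition ball :: "'a set \<Rightarrow> 'a set set \<Rightarrow> ('a set \<Rightarrow> real) \<Rightarrow> 'a \<Rightarrow> real \<Rightarrow> 'a set" where
  "ball V E w v r = {u \<in> V. gdist V E w v u \<le> ereal r}"

definition Vr :: "'a set \<Rightarrow> 'a set set \<Rightarrow> ('a set \<Rightarrow> real) \<Rightarrow> ('a \<Rightarrow> 'a set) \<Rightarrow> real \<Rightarrow> 'a set" where
  "Vr V E w Kset r = {v \<in> V. ball V E w v r \<subseteq> Kset v}"

text \<open>Hop relation of the auxiliary graph H: a hop from v to v' \<in> K[v] - {v}.\<close>
definition hop :: "'a set \<Rightarrow> ('a \<Rightarrow> 'a set) \<Rightarrow> ('a \<times> 'a) set" where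
  "hop V Kset = {(v, v'). v \<in> V \<and> v' \<in> Kset v \<and> v' \<noteq> v}"

definition hop_dist :: "'a set \<Rightarrow> ('a \<Rightarrow> 'a set) \<Rightarrow> 'a \<Rightarrow> 'a \<Rightarrow> enat" where
  "hop_dist V Kset x y = Inf {enat k | k. (x, y) \<in> (hop V Kset) ^^ k}"

definition A_set :: "'a set \<Rightarrow> ('a \<Rightarrow> 'a set) \<Rightarrow> real \<Rightarrow> 'a \<Rightarrow> 'a set" where
  "A_set V Kset eps x = {y. \<exists>k \<le> nat \<lceil>1 / eps\<rceil>. (x, y) \<in> (hop V Kset) ^^ k}"

end

(* Measure the vertices of P by their distance from s along P. If a vertex v of P lies in
   V_r, every later vertex of P at distance at most r = eps d(s,t)/2 + W from v lies in
   ball(v, r), a subset of K[v], hence is a single hop away. Hopping greedily to the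
   farthest such vertex advances by more than eps d(s,t)/2 per hop, since single edges
   weigh at most W. So ceil(2/eps) hops reach t, and ceil(1/eps) hops from each end
   each cover more than half of P, so the two runs meet; a greedy run that cannot
   continue has stopped exactly at the first vertex of P outside V_r. *)

theory Submission
  imports Defs
begin

lemma walk_weight_Nil [simp]: "walk_weight w [] = 0"
  and walk_weight_singleton [simp]: "walk_weight w [a] = 0"
  and walk_weight_Cons_Cons [simp]: "walk_weight w (a # b # xs) = w {a, b} + walk_weight w (b # xs)"
  by (simp_all add: walk_weight_def)

lemma walk_weight_append_overlap:
  "walk_weight w (xs @ y # ys) = walk_weight w (xs @ [y]) + walk_weight w (y # ys)"
  by (induction xs rule: induct_list012) auto

lemma walk_weight_take_drop:
  assumes "k < length xs"
  shows "walk_weight w xs = walk_weight w (take (Suc k) xs) + walk_weight w (drop k xs)"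
  using walk_weight_append_overlap[of w "take k xs" "xs ! k" "drop (Suc k) xs"] assms
  by (simp add: id_take_nth_drop[OF assms, symmetric] take_Suc_conv_app_nth Cons_nth_drop_Suc)

lemma walk_weight_rev: "walk_weight w (rev xs) = walk_weight w xs"
proof (induction xs rule: induct_list012)
  case (3 a b xs)
  have "walk_weight w (rev (a # b # xs)) = walk_weight w (rev xs @ [b]) + walk_weight w [b, a]"
    using walk_weight_append_overlap[of w "rev xs" b "[a]"] by simp
  with 3 show ?case by (simp add: insert_commute)
qed simp_all

lemma is_walk_Cons_Cons:
  "is_walk V E (a # b # xs) \<longleftrightarrow> {a, b} \<in> E \<and> a \<in> V \<and> is_walk V E (b # xs)"
  by (auto simp: is_walk_def)

lemma is_walk_rev: "is_walk V E p \<Longrightarrow> is_walk V E (rev p)"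
  by (simp add: is_walk_def insert_commute)

lemma walk_weight_nonneg:
  assumes "wgraph V E w" "is_walk V E p"
  shows "0 \<le> walk_weight w p"
  using assms(2)
proof (induction p rule: induct_list012)
  case (3 a b xs)
  then show ?case using assms(1) by (simp add: is_walk_Cons_Cons wgraph_def)
qed simp_all

lemma max_weight_ge:
  assumes "wgraph V E w" "e \<in> E"
  shows "w e \<le> max_weight E w"
proof -
  have "E \<subseteq> Pow V" and "finite V"
    using assms(1) unfolding wgraph_def by auto
  then have "finite E"
    by (meson finite_Pow_iff finite_subset)
  then show ?thesis
    using assms(2) unfolding max_weight_def by (intro Max_ge) auto
qed

lemma gdist_le_walk_weight:
  "is_walk V E p \<Longrightarrow> gdist V E w (hd p) (last p) \<le> ereal (walk_weight w p)"
  unfolding gdist_def by (rule Inf_lower) blast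

lemma is_walk_subwalk:
  assumes "is_walk V E p" "i \<le> j" "j < length p"
  shows "is_walk V E (drop i (take (Suc j) p))"
  using assms unfolding is_walk_def successively_conv_nth
  by (auto dest: in_set_dropD in_set_takeD)

lemma walk_weight_subwalk:
  assumes "i \<le> j" "j < length p"
  shows "walk_weight w (drop i (take (Suc j) p))
           = walk_weight w (take (Suc j) p) - walk_weight w (take (Suc i) p)"
  using walk_weight_take_drop[of i "take (Suc j) p" w] assms by (simp add: min_def)

definition hops_within :: "'a rel \<Rightarrow> nat \<Rightarrow> 'a \<Rightarrow> 'a set" where
  "hops_within R m x = {y. \<exists>k\<le>m. (x, y) \<in> R ^^ k}"

lemma hops_within_refl: "x \<in> hops_within R m x"
  unfolding hops_within_def by force

lemma hops_within_mono: "y \<in> hops_within R m x \<Longrightarrow> m \<le> m' \<Longrightarrow> y \<in> hops_within R m' x"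
  unfolding hops_within_def by (auto intro: order_trans)

lemma hops_within_Suc:
  "y \<in> hops_within R m x \<Longrightarrow> (y, z) \<in> R \<Longrightarrow> z \<in> hops_within R (Suc m) x"
  unfolding hops_within_def by (auto intro: relpow_Suc_I)

lemma A_set_eq_hops_within: "A_set V Kset eps x = hops_within (hop V Kset) (nat \<lceil>1 / eps\<rceil>) x"
  unfolding A_set_def hops_within_def ..

lemma hop_dist_le_if_hops_within:
  assumes "y \<in> hops_within (hop V Kset) m x"
  shows "hop_dist V Kset x y \<le> enat m"
proof -
  obtain k where "k \<le> m" "(x, y) \<in> hop V Kset ^^ k"
    using assms unfolding hops_within_def by blast
  then have "hop_dist V Kset x y \<le> enat k"
    unfolding hop_dist_def by (intro Inf_lower) blast
  with \<open>k \<le> m\<close> show ?thesis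
    by (simp add: order_trans)
qed

lemma hop_if_in_Vr:
  assumes "v \<in> Vr V E w Kset r" "u \<in> V" "u \<noteq> v" "gdist V E w v u \<le> ereal r"
  shows "(v, u) \<in> hop V Kset"
  using assms unfolding Vr_def ball_def hop_def by auto

lemma le_nat_ceiling_divide_mult: "0 < e \<Longrightarrow> a \<le> real (nat \<lceil>a / e\<rceil>) * e"
  using real_nat_ceiling_ge[of "a / e"] by (simp add: divide_le_eq)

lemma nat_ceiling_divide_eq_Suc:
  assumes "0 < a" "0 < e"
  obtains m where "nat \<lceil>a / e\<rceil> = Suc m"
  using assms gr0_implies_Suc[of "nat \<lceil>a / e\<rceil>"] by force

text \<open>Jump from \<open>i\<close> to the farthest \<open>i'\<close> within \<open>c + W\<close>. Since consecutive positions
  differ by at most \<open>W\<close>, the jump covers more than \<open>c\<close> unless it already reaches \<open>g\<close>.\<close>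

lemma greedy_hop_step:
  fixes p :: "nat \<Rightarrow> real" and x :: "nat \<Rightarrow> 'a"
  assumes c: "0 \<le> c"
    and mono: "\<And>i j. i \<le> j \<Longrightarrow> j \<le> g \<Longrightarrow> p i \<le> p j"
    and step: "\<And>j. j < g \<Longrightarrow> p (Suc j) \<le> p j + W"
    and hop: "\<And>i j. i < j \<Longrightarrow> j \<le> g \<Longrightarrow> p j \<le> p i + c + W \<Longrightarrow> (x i, x j) \<in> R"
    and i: "i < g"
  shows "\<exists>i'. i < i' \<and> i' \<le> g \<and> (\<forall>j. i < j \<longrightarrow> j \<le> i' \<longrightarrow> (x i, x j) \<in> R)
           \<and> (i' = g \<or> p i + c < p i')"
proof -
  define S where "S = {j. i < j \<and> j \<le> g \<and> p j \<le> p i + c + W}"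
  define i' where "i' = Max S"
  have "finite S"
    unfolding S_def by auto
  moreover have "Suc i \<in> S"
    unfolding S_def using i step[of i] c by auto
  ultimately have "i' \<in> S" and i'_max: "\<And>j. j \<in> S \<Longrightarrow> j \<le> i'"
    unfolding i'_def by (auto intro: Max_in)
  then have i': "i < i'" "i' \<le> g" "p i' \<le> p i + c + W"
    unfolding S_def by auto
  have "(x i, x j) \<in> R" if "i < j" "j \<le> i'" for j
    using hop[of i j] mono[of j i'] that i' by auto
  moreover have "p i + c < p i'" if "i' \<noteq> g"
  proof -
    have "Suc i' \<notin> S"
      using i'_max by fastforce
    then have "p i + c + W < p (Suc i')"
      using that i' unfolding S_def by auto
    then show ?thesis
      using step[of i'] that i' by linarith
  qed
  ultimately show ?thesis
    using i' by blast
qed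

lemma greedy_hops:
  fixes p :: "nat \<Rightarrow> real" and x :: "nat \<Rightarrow> 'a"
  assumes c: "0 \<le> c"
    and mono: "\<And>i j. i \<le> j \<Longrightarrow> j \<le> g \<Longrightarrow> p i \<le> p j"
    and step: "\<And>j. j < g \<Longrightarrow> p (Suc j) \<le> p j + W"
    and hop: "\<And>i j. i < j \<Longrightarrow> j \<le> g \<Longrightarrow> p j \<le> p i + c + W \<Longrightarrow> (x i, x j) \<in> R"
  shows "\<exists>i\<le>g. (\<forall>j\<le>i. x j \<in> hops_within R (Suc m) (x 0))
           \<and> (i = g \<or> p 0 + real (Suc m) * c < p i)"
proof -
  have extend: "\<exists>i'. i \<le> i' \<and> i' \<le> g \<and> (\<forall>j\<le>i'. x j \<in> hops_within R (Suc k) (x 0))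
                  \<and> (i' = g \<or> p i + c < p i')"
    if "i \<le> g" and reached: "\<forall>j\<le>i. x j \<in> hops_within R k (x 0)" for i k
  proof (cases "i = g")
    case True
    then show ?thesis
      using reached by (intro exI[of _ g]) (auto intro: hops_within_mono)
  next
    case False
    then obtain i' where i': "i < i'" "i' \<le> g" "i' = g \<or> p i + c < p i'"
      and hops: "\<And>j. i < j \<Longrightarrow> j \<le> i' \<Longrightarrow> (x i, x j) \<in> R"
      using greedy_hop_step[where p = p and x = x and R = R and g = g and c = c and W = W and i = i,
          OF c mono step hop] \<open>i \<le> g\<close>
      by auto
    have "x j \<in> hops_within R (Suc k) (x 0)" if "j \<le> i'" for j
    proof (cases "j \<le> i")
      case True
      then show ?thesis
        using reached by (auto intro: hops_within_mono)
    next
      case False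
      then show ?thesis
        using reached hops[of j] that by (auto intro: hops_within_Suc)
    qed
    with i' show ?thesis
      by (intro exI[of _ i']) auto
  qed
  show ?thesis
  proof (induction m)
    case 0
    show ?case
      using extend[of 0 0] by (auto simp: hops_within_refl)
  next
    case (Suc m)
    then obtain i where "i \<le> g" "\<forall>j\<le>i. x j \<in> hops_within R (Suc m) (x 0)"
      and progress: "i = g \<or> p 0 + real (Suc m) * c < p i"
      by blast
    then obtain i' where "i \<le> i'" "i' \<le> g" "\<forall>j\<le>i'. x j \<in> hops_within R (Suc (Suc m)) (x 0)"
      and "i' = g \<or> p i + c < p i'"
      using extend by blast
    moreover have "p 0 + real (Suc (Suc m)) * c < p i'" if "i' \<noteq> g"
      using progress that calculation by (auto simp: algebra_simps)
    ultimately show ?case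
      by blast
  qed
qed

locale walk_hops =
  fixes V :: "'a set" and E :: "'a set set" and w :: "'a set \<Rightarrow> real"
    and Kset :: "'a \<Rightarrow> 'a set" and eps :: real and P :: "'a list"
  assumes graph: "wgraph V E w" and walk: "is_walk V E P" and distinct: "distinct P"
    and eps: "0 < eps"
begin

abbreviation n :: nat where "n \<equiv> length P - 1"

definition pos :: "nat \<Rightarrow> real" where
  "pos k = walk_weight w (take (Suc k) P)"

definition advance :: real where
  "advance = eps / 2 * walk_weight w P"

definition radius :: real where
  "radius = advance + max_weight E w"

lemma length_P: "length P = Suc n"
  using walk unfolding is_walk_def by (cases P) auto

lemma nth_in_V: "j \<le> n \<Longrightarrow> P ! j \<in> V"
  using walk length_P unfolding is_walk_def by (metis le_imp_less_Suc nth_mem subsetD)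

lemma pos_0: "pos 0 = 0"
  using length_P unfolding pos_def by (cases P) auto

lemma pos_last: "pos n = walk_weight w P"
  using length_P unfolding pos_def by simp

lemma nth_subwalk:
  assumes "i \<le> j" "j \<le> n"
  shows "is_walk V E (drop i (take (Suc j) P))"
    and "hd (drop i (take (Suc j) P)) = P ! i" and "last (drop i (take (Suc j) P)) = P ! j"
    and "walk_weight w (drop i (take (Suc j) P)) = pos j - pos i"
proof -
  have "j < length P"
    using assms length_P by simp
  then show "is_walk V E (drop i (take (Suc j) P))"
    by (rule is_walk_subwalk[OF walk assms(1)])
  show "hd (drop i (take (Suc j) P)) = P ! i"
    using \<open>j < length P\<close> assms(1) by (simp add: hd_drop_conv_nth)
  show "last (drop i (take (Suc j) P)) = P ! j"
    using \<open>j < length P\<close> assms(1) by (simp add: last_drop take_Suc_conv_app_nth)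
  show "walk_weight w (drop i (take (Suc j) P)) = pos j - pos i"
    unfolding pos_def by (rule walk_weight_subwalk[OF assms(1) \<open>j < length P\<close>])
qed

lemma gdist_nth_le: "i \<le> j \<Longrightarrow> j \<le> n \<Longrightarrow> gdist V E w (P ! i) (P ! j) \<le> ereal (pos j - pos i)"
  using gdist_le_walk_weight nth_subwalk by metis

lemma pos_mono: "i \<le> j \<Longrightarrow> j \<le> n \<Longrightarrow> pos i \<le> pos j"
  using walk_weight_nonneg[OF graph] nth_subwalk by fastforce

lemma pos_Suc_le:
  assumes "j < n"
  shows "pos (Suc j) \<le> pos j + max_weight E w"
proof -
  have "drop j (take (Suc (Suc j)) P) = [P ! j, P ! Suc j]"
    using assms length_P by (simp add: take_Suc_conv_app_nth)
  then have "pos (Suc j) - pos j = w {P ! j, P ! Suc j}"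
    using nth_subwalk(4)[of j "Suc j"] assms by simp
  moreover have "{P ! j, P ! Suc j} \<in> E"
    using walk assms length_P unfolding is_walk_def by (auto intro: successively_nth)
  ultimately show ?thesis
    using max_weight_ge[OF graph] by fastforce
qed

lemma advance_nonneg: "0 \<le> advance"
  using walk_weight_nonneg[OF graph walk] eps unfolding advance_def by simp

lemma hop_nth:
  assumes "i < j" "j \<le> n" "P ! i \<in> Vr V E w Kset radius" "pos j \<le> pos i + radius"
  shows "(P ! i, P ! j) \<in> hop V Kset"
proof (rule hop_if_in_Vr)
  show "P ! j \<noteq> P ! i"
    using assms distinct length_P by (simp add: nth_eq_iff_index_eq)
  show "gdist V E w (P ! i) (P ! j) \<le> ereal radius"
    using gdist_nth_le[of i j] assms by (simp add: order_trans)
qed (use assms nth_in_V in auto)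

lemma reach_along_walk:
  assumes "g \<le> n" "\<And>i. i < g \<Longrightarrow> P ! i \<in> Vr V E w Kset radius"
  shows "\<exists>i\<le>g. (\<forall>j\<le>i. P ! j \<in> hops_within (hop V Kset) (Suc m) (hd P))
           \<and> (i = g \<or> real (Suc m) * advance < pos i)"
proof -
  have "hd P = P ! 0"
    using length_P by (cases P) auto
  moreover have "\<exists>i\<le>g. (\<forall>j\<le>i. P ! j \<in> hops_within (hop V Kset) (Suc m) (P ! 0))
           \<and> (i = g \<or> pos 0 + real (Suc m) * advance < pos i)"
    by (rule greedy_hops[OF advance_nonneg])
      (use assms pos_mono pos_Suc_le in \<open>auto simp: radius_def add.assoc intro!: hop_nth\<close>)
  ultimately show ?thesis
    by (simp add: pos_0)
qed

lemma walk_hops_rev: "walk_hops V E w eps (rev P)"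
  using graph walk distinct eps by unfold_locales (simp_all add: is_walk_rev)

lemma advance_mult_ge:
  assumes "a \<le> real k * eps"
  shows "a * walk_weight w P \<le> 2 * real k * advance"
  using mult_right_mono[OF assms walk_weight_nonneg[OF graph walk]] unfolding advance_def
  by (simp add: algebra_simps)

lemma reach_from_both_ends:
  assumes "gs \<le> n" "gt \<le> n"
    and "\<And>i. i < gs \<Longrightarrow> P ! i \<in> Vr V E w Kset radius"
    and "\<And>i. i < gt \<Longrightarrow> P ! (n - i) \<in> Vr V E w Kset radius"
  shows "\<exists>ia\<le>gs. \<exists>ib\<le>gt. (\<forall>j\<le>ia. P ! j \<in> A_set V Kset eps (hd P))
           \<and> (\<forall>j\<le>ib. P ! (n - j) \<in> A_set V Kset eps (last P))
           \<and> (ia = gs \<or> ib = gt \<or> n \<le> ia + ib)"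
proof -
  \<comment> \<open>The hops from the last vertex are the forward hops along \<open>rev P\<close>.\<close>
  interpret rev: walk_hops V E w Kset eps "rev P"
    by (rule walk_hops_rev)
  have rev_nth: "rev P ! j = P ! (n - j)" if "j \<le> n" for j
    using that length_P by (simp add: rev_nth)
  have rev_pos: "rev.pos j = walk_weight w P - pos (n - j)" if "j \<le> n" for j
    using walk_weight_take_drop[of "n - j" P w] that length_P
    by (simp add: rev.pos_def pos_def take_rev walk_weight_rev Suc_diff_le)
  have rev_advance: "rev.advance = advance" and rev_radius: "rev.radius = radius"
    by (simp_all add: rev.advance_def advance_def rev.radius_def radius_def walk_weight_rev)
  obtain m where m: "nat \<lceil>1 / eps\<rceil> = Suc m"
    using nat_ceiling_divide_eq_Suc[OF _ eps, of 1] by auto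
  obtain ia where ia: "ia \<le> gs" "\<forall>j\<le>ia. P ! j \<in> hops_within (hop V Kset) (Suc m) (hd P)"
    and ia_progress: "ia = gs \<or> real (Suc m) * advance < pos ia"
    using reach_along_walk[OF assms(1,3)] by blast
  obtain ib where ib: "ib \<le> gt" "\<forall>j\<le>ib. rev P ! j \<in> hops_within (hop V Kset) (Suc m) (hd (rev P))"
    and ib_progress: "ib = gt \<or> real (Suc m) * rev.advance < rev.pos ib"
  proof -
    have "\<And>i. i < gt \<Longrightarrow> rev P ! i \<in> Vr V E w Kset rev.radius"
      using assms(2,4) rev_nth rev_radius by simp
    then show ?thesis
      using that rev.reach_along_walk[of gt m] assms(2) by auto
  qed
  have "n \<le> ia + ib" if "ia \<noteq> gs" "ib \<noteq> gt"
  proof (rule ccontr)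
    assume "\<not> n \<le> ia + ib"
    then have "pos ia \<le> pos (n - ib)"
      by (intro pos_mono) auto
    moreover have "walk_weight w P \<le> 2 * real (Suc m) * advance"
      using advance_mult_ge[of 1 "Suc m"] le_nat_ceiling_divide_mult[OF eps, of 1] m by simp
    ultimately show False
      using ia_progress ib_progress that rev_pos[of ib] ib assms(2)
      by (simp add: rev_advance algebra_simps)
  qed
  moreover have "\<forall>j\<le>ia. P ! j \<in> A_set V Kset eps (hd P)"
    using ia(2) m unfolding A_set_eq_hops_within by simp
  moreover have "\<forall>j\<le>ib. P ! (n - j) \<in> A_set V Kset eps (last P)"
    using ib assms(2) rev_nth m unfolding A_set_eq_hops_within by (simp add: hd_rev)
  ultimately show ?thesis
    using ia(1) ib(1) by blast
qed

lemma nth_in_Vr_if_walk_in_Vr: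
  "set P \<subseteq> Vr V E w Kset radius \<Longrightarrow> j \<le> n \<Longrightarrow> P ! j \<in> Vr V E w Kset radius"
  using length_P by (simp add: subset_iff)

lemma hop_dist_le_if_walk_in_Vr:
  assumes "set P \<subseteq> Vr V E w Kset radius"
  shows "hop_dist V Kset (hd P) (last P) \<le> enat (nat \<lceil>2 / eps\<rceil>)"
proof -
  obtain m where m: "nat \<lceil>2 / eps\<rceil> = Suc m"
    using nat_ceiling_divide_eq_Suc[OF _ eps, of 2] by auto
  have "\<And>i. i < n \<Longrightarrow> P ! i \<in> Vr V E w Kset radius"
    using nth_in_Vr_if_walk_in_Vr[OF assms] by simp
  from reach_along_walk[OF order_refl this, of m]
  obtain i where "i \<le> n" and reached: "\<forall>j\<le>i. P ! j \<in> hops_within (hop V Kset) (Suc m) (hd P)"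
    and progress: "i = n \<or> real (Suc m) * advance < pos i"
    by blast
  have "walk_weight w P \<le> real (Suc m) * advance"
    using advance_mult_ge[of 2 "Suc m"] le_nat_ceiling_divide_mult[OF eps, of 2] m
    by (simp add: algebra_simps)
  moreover have "pos i \<le> walk_weight w P"
    using pos_mono[OF \<open>i \<le> n\<close>] pos_last by simp
  ultimately have "i = n"
    using progress by linarith
  moreover have "last P = P ! n"
    using last_conv_nth[of P] length_P by force
  ultimately have "last P \<in> hops_within (hop V Kset) (Suc m) (hd P)"
    using reached by simp
  then show ?thesis
    using hop_dist_le_if_hops_within m by metis
qed

lemma common_vertex_if_walk_in_Vr:
  assumes "set P \<subseteq> Vr V E w Kset radius"
  shows "set P \<inter> A_set V Kset eps (hd P) \<inter> A_set V Kset eps (last P) \<noteq> {}"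
proof -
  have "\<And>i. i < n \<Longrightarrow> P ! i \<in> Vr V E w Kset radius"
    and "\<And>i. i < n \<Longrightarrow> P ! (n - i) \<in> Vr V E w Kset radius"
    using nth_in_Vr_if_walk_in_Vr[OF assms] by simp_all
  from reach_from_both_ends[OF order_refl order_refl this]
  obtain ia ib where "ia \<le> n" "ib \<le> n" and reached_s: "\<forall>j\<le>ia. P ! j \<in> A_set V Kset eps (hd P)"
    and reached_t: "\<forall>j\<le>ib. P ! (n - j) \<in> A_set V Kset eps (last P)"
    and "ia = n \<or> ib = n \<or> n \<le> ia + ib"
    by blast
  then have "n - ia \<le> ib"
    by arith
  then have "P ! ia \<in> A_set V Kset eps (last P)"
    using reached_t diff_diff_cancel[OF \<open>ia \<le> n\<close>] by metis
  moreover have "P ! ia \<in> set P"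
    using \<open>ia \<le> n\<close> length_P by simp
  ultimately have "P ! ia \<in> set P \<inter> A_set V Kset eps (hd P) \<inter> A_set V Kset eps (last P)"
    using reached_s \<open>ia \<le> n\<close> by simp
  then show ?thesis
    by blast
qed

lemma vertex_outside_Vr_reached:
  assumes "set P - Vr V E w Kset radius \<noteq> {}"
  shows "(set P - Vr V E w Kset radius) \<inter> A_set V Kset eps (hd P) \<noteq> {}
       \<or> (set P - Vr V E w Kset radius) \<inter> A_set V Kset eps (last P) \<noteq> {}"
proof -
  let ?bad = "\<lambda>j. P ! j \<notin> Vr V E w Kset radius"
  obtain x where x: "x \<in> set P" "x \<notin> Vr V E w Kset radius"
    using assms by blast
  then obtain k where "k < length P" "P ! k = x"
    unfolding in_set_conv_nth by blast
  then have "k \<le> n" "?bad k"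
    using x(2) length_P by auto
  have "\<exists>i. i \<le> n \<and> ?bad i"
    using \<open>k \<le> n\<close> \<open>?bad k\<close> by blast
  from exists_least_iff[THEN iffD1, OF this]
  obtain gs where gs: "gs \<le> n" "?bad gs" and least_s: "\<forall>i<gs. \<not> (i \<le> n \<and> ?bad i)"
    by blast
  have "\<exists>i. i \<le> n \<and> ?bad (n - i)"
    using \<open>k \<le> n\<close> \<open>?bad k\<close> diff_diff_cancel diff_le_self by metis
  from exists_least_iff[THEN iffD1, OF this]
  obtain gt where gt: "gt \<le> n" "?bad (n - gt)" and least_t: "\<forall>i<gt. \<not> (i \<le> n \<and> ?bad (n - i))"
    by blast
  have good_s: "P ! i \<in> Vr V E w Kset radius" if "i < gs" for i
    using least_s that gs(1) by simp
  have good_t: "P ! (n - i) \<in> Vr V E w Kset radius" if "i < gt" for i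
    using least_t that gt(1) by simp
  have "\<not> n - gt < gs"
    using good_s gt(2) by blast
  then have "gs + gt \<le> n"
    using gt(1) by linarith
  obtain ia ib where "ia \<le> gs" "ib \<le> gt" and reached_s: "\<forall>j\<le>ia. P ! j \<in> A_set V Kset eps (hd P)"
    and reached_t: "\<forall>j\<le>ib. P ! (n - j) \<in> A_set V Kset eps (last P)"
    and "ia = gs \<or> ib = gt \<or> n \<le> ia + ib"
    using reach_from_both_ends[OF gs(1) gt(1) good_s good_t] by blast
  then consider "ia = gs" | "ib = gt"
    using \<open>gs + gt \<le> n\<close> by arith
  then show ?thesis
  proof cases
    case 1
    then have "P ! gs \<in> (set P - Vr V E w Kset radius) \<inter> A_set V Kset eps (hd P)"
      using gs reached_s length_P by simp
    then show ?thesis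
      by blast
  next
    case 2
    then have "P ! (n - gt) \<in> (set P - Vr V E w Kset radius) \<inter> A_set V Kset eps (last P)"
      using gt reached_t length_P by simp
    then show ?thesis
      by blast
  qed
qed

end

theorem lemma8:
  fixes V :: "'a set" and E :: "'a set set" and w :: "'a set \<Rightarrow> real"
    and K :: nat and eps :: real and s t :: "'a" and P :: "'a list"
    and Kset :: "'a \<Rightarrow> 'a set"
  assumes G: "wgraph V E w"
    and K: "K > 0"
    and Ks: "valid_Ksets V E w K Kset"
    and eps: "eps > 0"
    and st: "s \<in> V" "t \<in> V"
    and fin: "gdist V E w s t < \<infinity>"
    and P: "is_shortest_path V E w s t P"
  defines "r \<equiv> eps / 2 * real_of_ereal (gdist V E w s t) + max_weight E w"
  shows "(set P \<subseteq> Vr V E w Kset r \<longrightarrow> hop_dist V Kset s t \<le> enat (nat \<lceil>2 / eps\<rceil>))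
       \<and> (set P \<subseteq> Vr V E w Kset r \<longrightarrow>
            set P \<inter> A_set V Kset eps s \<inter> A_set V Kset eps t \<noteq> {})
       \<and> (set P - Vr V E w Kset r \<noteq> {} \<longrightarrow>
            (set P - Vr V E w Kset r) \<inter> A_set V Kset eps s \<noteq> {} \<or>
            (set P - Vr V E w Kset r) \<inter> A_set V Kset eps t \<noteq> {})"
proof -
  interpret walk_hops V E w Kset eps P
    using G P eps by unfold_locales (simp_all add: is_shortest_path_def)
  have "gdist V E w s t = ereal (walk_weight w P)" "hd P = s" "last P = t"
    using P by (simp_all add: is_shortest_path_def)
  then have "r = radius"
    by (simp add: r_def radius_def advance_def)
  then show ?thesis
    using hop_dist_le_if_walk_in_Vr common_vertex_if_walk_in_Vr vertex_outside_Vr_reached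
      \<open>hd P = s\<close> \<open>last P = t\<close> by simp
qed

end
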